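(* Let ${\mathscr X}$ be a Hausdorff space and ${\mathscr A}$ a set of finite Borel partitions of ${\mathscr X}$, directed under refinement, that resolves ${\mathscr X}$. For any Borel probability measures $P,Q$ on ${\mathscr X}$ with $P\ll Q$ and any $L>0$, $$\|P-P\wedge LQ\|_{1}=\sup_{\alpha\in{\mathscr A}}\|P_\alpha-P_\alpha\wedge LQ_\alpha\|_{1,\alpha}=\sup_{\alpha\in{\mathscr A}}\sum_{A\in\alpha}\bigl(P(A)-LQ(A)\bigr)_+ .$$
   Context: Partitions, refinement order and "resolves" are as usual: a partition is a finite collection of non-empty disjoint Borel sets covering ${\mathscr X}$; ${\mathscr A}$ resolves ${\mathscr X}$ if the sets in its partitions generate the Borel $\sigma$-algebra. For measures $\mu,\nu$, $\mu\wedge\nu$ is the largest measure dominated by both (so $\|P-P\wedge LQ\|_1=\int (p-L)_+\,dQ$ with $p=dP/dQ$). For histograms $P_\alpha=(P(A))_{A\in\alpha}$, $Q_\alpha=(Q(A))_{A\in\alpha}$, $P_\alpha\wedge LQ_\alpha$ is the componentwise minimum and $\|\cdot\|_{1,\alpha}$ is the $\ell^1$-norm over $A\in\alpha$. *)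

theory Defs
  imports "HOL-Probability.Probability"
begin

definition borel_partition :: "'a::topological_space set set \<Rightarrow> bool" where
  "borel_partition \<alpha> \<longleftrightarrow> finite \<alpha> \<and> (\<forall>A\<in>\<alpha>. A \<in> sets borel \<and> A \<noteq> {}) \<and>
     disjoint \<alpha> \<and> \<Union>\<alpha> = UNIV"

definition refines :: "'a set set \<Rightarrow> 'a set set \<Rightarrow> bool" where
  "refines \<beta> \<alpha> \<longleftrightarrow> (\<forall>B\<in>\<beta>. \<exists>A\<in>\<alpha>. B \<subseteq> A)"

definition directed_refinement :: "'a set set set \<Rightarrow> bool" where
  "directed_refinement \<A> \<longleftrightarrow> \<A> \<noteq> {} \<and>
     (\<forall>\<alpha>\<in>\<A>. \<forall>\<beta>\<in>\<A>. \<exists>\<gamma>\<in>\<A>. refines \<gamma> \<alpha> \<and> refines \<gamma> \<beta>)"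

definition resolves :: "'a::topological_space set set set \<Rightarrow> bool" where
  "resolves \<A> \<longleftrightarrow> sigma_sets UNIV (\<Union>\<A>) = sets borel"

text \<open>\<open>\<parallel>P - P \<and> L Q\<parallel>\<^sub>1 = \<integral> (p - L)\<^sub>+ dQ\<close> with \<open>p = dP/dQ\<close>.\<close>
definition meet_defect :: "'a measure \<Rightarrow> 'a measure \<Rightarrow> real \<Rightarrow> ennreal" where
  "meet_defect P Q L = (\<integral>\<^sup>+ x. ennreal (max 0 (enn2real (RN_deriv Q P x) - L)) \<partial>Q)"

definition hist_meet_defect :: "'a measure \<Rightarrow> 'a measure \<Rightarrow> real \<Rightarrow> 'a set set \<Rightarrow> real" where
  "hist_meet_defect P Q L \<alpha> =
     (\<Sum>A\<in>\<alpha>. \<bar>measure P A - min (measure P A) (L * measure Q A)\<bar>)"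

end

(*
  With p = dP/dQ, the left-hand side is the total mass of the measure with Q-density
  (p - L)\<^sub>+. On every Borel set A this measure dominates (P(A) - L Q(A))\<^sub>+, so each
  histogram sum is a lower bound. Conversely its mass is P(S) - L Q(S) for S = {p > L}.
  By directedness, the finite unions of cells form an algebra, which generates the Borel
  sets because A resolves the space; hence S is approximated by such a union F, with
  (P + L Q)(S \<Delta> F) arbitrarily small, and P(F) - L Q(F) is bounded by the histogram sum of
  a partition whose cells make up F.
*)
theory Submission
  imports Defs
begin

definition approximable :: "'a measure \<Rightarrow> 'a set set \<Rightarrow> 'a set \<Rightarrow> bool" where
  "approximable M G S \<longleftrightarrow> (\<forall>e>0. \<exists>F\<in>G. measure M (sym_diff S F) < e)"

context finite_measure
begin

lemma measure_sym_diff_triangle: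
  assumes "A \<in> sets M" "B \<in> sets M" "C \<in> sets M"
  shows "measure M (sym_diff A C) \<le> measure M (sym_diff A B) + measure M (sym_diff B C)"
proof -
  have "measure M (sym_diff A C) \<le> measure M (sym_diff A B \<union> sym_diff B C)"
    by (rule finite_measure_mono) (use assms in auto)
  also have "\<dots> \<le> measure M (sym_diff A B) + measure M (sym_diff B C)"
    by (rule measure_Un_le) (use assms in auto)
  finally show ?thesis .
qed

lemma measure_le_add_sym_diff:
  assumes "A \<in> sets M" "B \<in> sets M"
  shows "measure M A \<le> measure M B + measure M (sym_diff A B)"
proof -
  have "measure M A \<le> measure M (B \<union> sym_diff A B)"
    by (rule finite_measure_mono) (use assms in auto)
  also have "\<dots> \<le> measure M B + measure M (sym_diff A B)"
    by (rule measure_Un_le) (use assms in auto)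
  finally show ?thesis .
qed

lemma measure_sym_diff_Un_le:
  assumes "A \<in> sets M" "B \<in> sets M" "F \<in> sets M" "H \<in> sets M"
  shows "measure M (sym_diff (A \<union> B) (F \<union> H)) \<le> measure M (sym_diff A F) + measure M (sym_diff B H)"
proof -
  have "measure M (sym_diff (A \<union> B) (F \<union> H)) \<le> measure M (sym_diff A F \<union> sym_diff B H)"
    by (rule finite_measure_mono) (use assms in auto)
  also have "\<dots> \<le> measure M (sym_diff A F) + measure M (sym_diff B H)"
    by (rule measure_Un_le) (use assms in auto)
  finally show ?thesis .
qed

context
  fixes G :: "'a set set"
  assumes G: "algebra (space M) G" "G \<subseteq> sets M"
begin

interpretation G: algebra "space M" G by (fact G(1))

lemma approximable_Un:
  assumes "A \<in> sets M" "B \<in> sets M" "approximable M G A" "approximable M G B"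
  shows "approximable M G (A \<union> B)"
  unfolding approximable_def
proof (intro allI impI)
  fix e :: real assume "e > 0"
  then obtain F H where F: "F \<in> G" "measure M (sym_diff A F) < e / 2"
    and H: "H \<in> G" "measure M (sym_diff B H) < e / 2"
    using assms(3,4) unfolding approximable_def by (meson half_gt_zero)
  have "F \<in> sets M" "H \<in> sets M" using F(1) H(1) G(2) by auto
  then have "measure M (sym_diff (A \<union> B) (F \<union> H)) < e"
    using measure_sym_diff_Un_le[of A B F H] assms(1,2) F(2) H(2) by linarith
  then show "\<exists>F\<in>G. measure M (sym_diff (A \<union> B) F) < e"
    using F(1) H(1) by blast
qed

lemma approximable_compl:
  assumes "A \<subseteq> space M" "approximable M G A"
  shows "approximable M G (space M - A)"
  unfolding approximable_def
proof (intro allI impI)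
  fix e :: real assume "e > 0"
  then obtain F where F: "F \<in> G" "measure M (sym_diff A F) < e"
    using assms(2) unfolding approximable_def by blast
  have "sym_diff (space M - A) (space M - F) = sym_diff A F"
    using assms(1) G.sets_into_space F(1) by blast
  then show "\<exists>F\<in>G. measure M (sym_diff (space M - A) F) < e"
    using F by (metis G.compl_sets)
qed

lemma approximable_UN_lessThan:
  fixes A :: "nat \<Rightarrow> 'a set"
  assumes "\<And>i. i < n \<Longrightarrow> A i \<in> sets M" "\<And>i. i < n \<Longrightarrow> approximable M G (A i)"
  shows "approximable M G (\<Union>i<n. A i)"
  using assms
proof (induction n)
  case 0
  then show ?case unfolding approximable_def by force
next
  case (Suc n)
  have "approximable M G ((\<Union>i<n. A i) \<union> A n)"
    by (rule approximable_Un) (use Suc in auto)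
  then show ?case by (simp add: lessThan_Suc Un_commute)
qed

lemma approximable_UN:
  fixes A :: "nat \<Rightarrow> 'a set"
  assumes "\<And>i. A i \<in> sets M" "\<And>i. approximable M G (A i)"
  shows "approximable M G (\<Union>i. A i)"
  unfolding approximable_def
proof (intro allI impI)
  fix e :: real assume "e > 0"
  have "(\<lambda>n. measure M (\<Union>i<n. A i)) \<longlonglongrightarrow> measure M (\<Union>n. \<Union>i<n. A i)"
    using assms(1) by (intro finite_Lim_measure_incseq monoI UN_mono) auto
  moreover have "(\<Union>n. \<Union>i<n. A i) = (\<Union>i. A i)" by blast
  ultimately obtain n where n: "measure M (\<Union>i. A i) - measure M (\<Union>i<n. A i) < e / 2"
    using \<open>e > 0\<close> by (metis LIMSEQ_D abs_less_iff half_gt_zero le_refl minus_diff_eq real_norm_def)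
  have "measure M (sym_diff (\<Union>i. A i) (\<Union>i<n. A i)) = measure M (\<Union>i. A i) - measure M (\<Union>i<n. A i)"
    using assms(1) by (subst finite_measure_Diff[symmetric]) (auto intro!: arg_cong[where f = "measure M"])
  moreover obtain F where F: "F \<in> G" "measure M (sym_diff (\<Union>i<n. A i) F) < e / 2"
    using approximable_UN_lessThan[of n A] assms \<open>e > 0\<close> unfolding approximable_def
    by (meson half_gt_zero)
  moreover have "F \<in> sets M" using F(1) G(2) by blast
  ultimately have "measure M (sym_diff (\<Union>i. A i) F) < e"
    using measure_sym_diff_triangle[of "\<Union>i. A i" "\<Union>i<n. A i" F] n assms(1) by auto
  then show "\<exists>F\<in>G. measure M (sym_diff (\<Union>i. A i) F) < e" using F(1) by blast
qed

lemma approximable_sigma_sets: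
  assumes "S \<in> sigma_sets (space M) G"
  shows "approximable M G S"
proof -
  have sigma_G: "sigma_sets (space M) G \<subseteq> sets M"
    using G(2) by (rule sets.sigma_sets_subset)
  from assms show ?thesis
  proof (induction rule: sigma_sets.induct)
    case (Basic A)
    then show ?case unfolding approximable_def by force
  next
    case Empty
    then show ?case unfolding approximable_def by force
  next
    case (Compl A)
    then show ?case using sigma_G sets.sets_into_space by (blast intro: approximable_compl)
  next
    case (Union A)
    then show ?case using sigma_G by (blast intro: approximable_UN)
  qed
qed

end

end

lemma ennreal_diff_add_eq_max:
  assumes "q \<noteq> \<infinity>" "0 \<le> L"
  shows "ennreal (enn2real q - L) + ennreal L = max q (ennreal L)"
proof -
  obtain r where r: "q = ennreal r" "0 \<le> r"
    using assms(1) by (cases q) auto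
  show ?thesis
  proof (cases "L \<le> r")
    case True
    then have "ennreal (r - L) + ennreal L = ennreal r"
      using assms(2) by (subst ennreal_plus[symmetric]) auto
    then show ?thesis using True r by (simp add: max_absorb1)
  next
    case False
    then show ?thesis using r by (simp add: max_absorb2 ennreal_neg)
  qed
qed

lemma ennreal_add_le: "0 \<le> e \<Longrightarrow> ennreal (a + e) \<le> ennreal a + ennreal e"
  by (cases "0 \<le> a") (auto simp: ennreal_neg intro: ennreal_leI)

definition excess_measure :: "'a measure \<Rightarrow> 'a measure \<Rightarrow> real \<Rightarrow> 'a measure" where
  "excess_measure P Q L = density Q (\<lambda>x. ennreal (enn2real (RN_deriv Q P x) - L))"

lemma meet_defect_eq_emeasure_excess_measure:
  "meet_defect P Q L = emeasure (excess_measure P Q L) (space Q)"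
  unfolding meet_defect_def excess_measure_def
  by (simp add: emeasure_density ennreal_max_0)

locale abs_continuous_finite_measures = P: finite_measure P + Q: finite_measure Q
  for P Q :: "'a measure" +
  assumes sets_eq: "sets P = sets Q" and abs_cont: "absolutely_continuous Q P"
begin

lemma density_RN_deriv_eq: "density Q (RN_deriv Q P) = P"
  by (rule Q.density_RN_deriv[OF abs_cont sets_eq])

lemma emeasure_eq_RN_deriv_integral:
  "A \<in> sets Q \<Longrightarrow> emeasure P A = (\<integral>\<^sup>+x. RN_deriv Q P x * indicator A x \<partial>Q)"
  by (metis density_RN_deriv_eq emeasure_density borel_measurable_RN_deriv)

lemma AE_RN_deriv_finite: "AE x in Q. RN_deriv Q P x \<noteq> \<infinity>"
  by (rule Q.RN_deriv_finite[OF P.sigma_finite_measure_axioms abs_cont sets_eq])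

lemma emeasure_excess_measure_ge:
  assumes A: "A \<in> sets Q" and L: "0 \<le> L"
  shows "ennreal (measure P A - L * measure Q A) \<le> emeasure (excess_measure P Q L) A"
proof -
  let ?f = "\<lambda>x. ennreal (enn2real (RN_deriv Q P x) - L)"
  have "ennreal (measure P A) = (\<integral>\<^sup>+x. RN_deriv Q P x * indicator A x \<partial>Q)"
    using A by (simp add: P.emeasure_eq_measure[symmetric] emeasure_eq_RN_deriv_integral)
  also have "\<dots> \<le> (\<integral>\<^sup>+x. (?f x + ennreal L) * indicator A x \<partial>Q)"
    by (intro nn_integral_mono_AE eventually_mono[OF AE_RN_deriv_finite] mult_right_mono)
      (simp_all add: ennreal_diff_add_eq_max L)
  also have "\<dots> = emeasure (excess_measure P Q L) A + ennreal (L * measure Q A)"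
    using A L by (simp add: distrib_right nn_integral_add excess_measure_def emeasure_density
        nn_integral_cmult_indicator Q.emeasure_eq_measure ennreal_mult)
  finally show ?thesis
    using L by (simp add: ennreal_minus[symmetric] ennreal_minus_le_iff add.commute)
qed

lemma emeasure_excess_measure_space:
  assumes L: "0 \<le> L"
  defines "S \<equiv> {x \<in> space Q. L < enn2real (RN_deriv Q P x)}"
  shows "emeasure (excess_measure P Q L) (space Q) = ennreal (measure P S - L * measure Q S)"
proof -
  let ?f = "\<lambda>x. ennreal (enn2real (RN_deriv Q P x) - L)"
  have S[measurable]: "S \<in> sets Q" unfolding S_def by measurable
  have "emeasure (excess_measure P Q L) (space Q) = (\<integral>\<^sup>+x. ?f x * indicator (space Q) x \<partial>Q)"
    unfolding excess_measure_def by (rule emeasure_density) auto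
  also have "\<dots> = (\<integral>\<^sup>+x. ?f x * indicator S x \<partial>Q)"
    by (intro nn_integral_cong) (simp add: S_def ennreal_neg indicator_def)
  finally have "emeasure (excess_measure P Q L) (space Q) + ennreal (L * measure Q S)
      = (\<integral>\<^sup>+x. (?f x + ennreal L) * indicator S x \<partial>Q)"
    using L S by (simp add: distrib_right nn_integral_add nn_integral_cmult_indicator
        Q.emeasure_eq_measure ennreal_mult)
  also have "\<dots> = (\<integral>\<^sup>+x. RN_deriv Q P x * indicator S x \<partial>Q)"
  proof (intro nn_integral_cong_AE eventually_mono[OF AE_RN_deriv_finite])
    fix x assume fin: "RN_deriv Q P x \<noteq> \<infinity>"
    then have "x \<in> S \<Longrightarrow> ennreal L \<le> RN_deriv Q P x"
      unfolding S_def by (cases "RN_deriv Q P x") (auto intro: ennreal_leI)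
    then show "(?f x + ennreal L) * indicator S x = RN_deriv Q P x * indicator S x"
      by (simp add: ennreal_diff_add_eq_max[OF fin L] max_absorb1 split: split_indicator)
  qed
  also have "\<dots> = ennreal (measure P S)"
    by (simp add: emeasure_eq_RN_deriv_integral[symmetric] P.emeasure_eq_measure sets_eq)
  finally have "emeasure (excess_measure P Q L) (space Q)
      = ennreal (measure P S) - ennreal (L * measure Q S)"
    by (metis ennreal_add_diff_cancel_right ennreal_neq_top)
  with L show ?thesis by (simp add: ennreal_minus)
qed

lemma sum_excess_le_emeasure_excess_measure:
  assumes "finite \<alpha>" "\<alpha> \<subseteq> sets Q" "disjoint \<alpha>" "0 \<le> L"
  shows "ennreal (\<Sum>A\<in>\<alpha>. max 0 (measure P A - L * measure Q A))
    \<le> emeasure (excess_measure P Q L) (space Q)"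
proof -
  have "ennreal (\<Sum>A\<in>\<alpha>. max 0 (measure P A - L * measure Q A))
      = (\<Sum>A\<in>\<alpha>. ennreal (measure P A - L * measure Q A))"
    by (simp add: sum_ennreal[symmetric] ennreal_max_0)
  also have "\<dots> \<le> (\<Sum>A\<in>\<alpha>. emeasure (excess_measure P Q L) A)"
    using assms by (intro sum_mono emeasure_excess_measure_ge) auto
  also have "\<dots> = emeasure (excess_measure P Q L) (\<Union>\<alpha>)"
    using assms by (intro sum_emeasure[where F = id, simplified])
      (auto simp: excess_measure_def disjoint_family_on_def disjoint_def)
  also have "\<dots> \<le> emeasure (excess_measure P Q L) (space Q)"
    unfolding excess_measure_def using emeasure_space[of "density Q _" "\<Union>\<alpha>"] by simp
  finally show ?thesis .
qed

lemma measure_Union_excess_le_sum: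
  assumes "finite \<alpha>" "\<alpha> \<subseteq> sets Q" "disjoint \<alpha>" "B \<subseteq> \<alpha>"
  shows "measure P (\<Union>B) - L * measure Q (\<Union>B) \<le> (\<Sum>A\<in>\<alpha>. max 0 (measure P A - L * measure Q A))"
proof -
  have B: "finite B" "B \<subseteq> sets Q" "disjoint_family_on id B"
    using assms finite_subset by (auto simp: disjoint_family_on_def disjoint_def)
  have "measure P (\<Union>B) - L * measure Q (\<Union>B) = (\<Sum>A\<in>B. measure P A - L * measure Q A)"
    using P.finite_measure_finite_Union[of B id] Q.finite_measure_finite_Union[of B id] B sets_eq
    by (simp add: sum_subtractf sum_distrib_left)
  also have "\<dots> \<le> (\<Sum>A\<in>B. max 0 (measure P A - L * measure Q A))"
    by (intro sum_mono) simp
  also have "\<dots> \<le> (\<Sum>A\<in>\<alpha>. max 0 (measure P A - L * measure Q A))"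
    using assms by (intro sum_mono2) auto
  finally show ?thesis .
qed

lemma measure_excess_le_sym_diff:
  assumes "S \<in> sets Q" "F \<in> sets Q" "0 \<le> L"
  shows "measure P S - L * measure Q S
    \<le> measure P F - L * measure Q F + (measure P (sym_diff S F) + L * measure Q (sym_diff S F))"
proof -
  have "measure P S \<le> measure P F + measure P (sym_diff S F)"
    using P.measure_le_add_sym_diff[of S F] assms sets_eq by simp
  moreover have "measure Q F \<le> measure Q S + measure Q (sym_diff S F)"
    using Q.measure_le_add_sym_diff[of F S] assms by (simp add: Un_commute)
  then have "L * measure Q F \<le> L * measure Q S + L * measure Q (sym_diff S F)"
    using assms(3) by (metis distrib_left mult_left_mono)
  ultimately show ?thesis by linarith
qed

lemma emeasure_excess_measure_eq_SUP:
  assumes G: "algebra (space Q) G" "G \<subseteq> sets Q" "sets Q \<subseteq> sigma_sets (space Q) G"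
    and L: "0 \<le> L"
  shows "emeasure (excess_measure P Q L) (space Q) = (SUP F\<in>G. ennreal (measure P F - L * measure Q F))"
proof (rule antisym)
  define S where "S = {x \<in> space Q. L < enn2real (RN_deriv Q P x)}"
  have S: "S \<in> sets Q" unfolding S_def by measurable
  \<comment> \<open>\<open>M = P + L Q\<close> measures the loss from replacing \<open>S\<close> by an element of \<open>G\<close>.\<close>
  define M where "M = density Q (\<lambda>x. RN_deriv Q P x + ennreal L)"
  have emeasure_M: "emeasure M D = emeasure P D + ennreal (L * measure Q D)" if "D \<in> sets Q" for D
    using that L unfolding M_def
    by (simp add: emeasure_density distrib_right nn_integral_add nn_integral_cmult_indicator
        emeasure_eq_RN_deriv_integral Q.emeasure_eq_measure ennreal_mult)
  have [simp]: "sets M = sets Q" "space M = space Q" unfolding M_def by simp_all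
  interpret M: finite_measure M
    by (rule finite_measureI) (simp add: emeasure_M P.emeasure_eq_measure)
  have measure_M: "measure M D = measure P D + L * measure Q D" if "D \<in> sets Q" for D
    using emeasure_M[OF that] L
    by (simp add: M.emeasure_eq_measure P.emeasure_eq_measure flip: ennreal_plus)
  show "emeasure (excess_measure P Q L) (space Q) \<le> (SUP F\<in>G. ennreal (measure P F - L * measure Q F))"
    unfolding emeasure_excess_measure_space[OF L, folded S_def]
  proof (rule ennreal_le_epsilon)
    fix e :: real assume "0 < e"
    moreover have "approximable M G S"
      using G S by (intro M.approximable_sigma_sets) auto
    ultimately obtain F where F: "F \<in> G" "measure M (sym_diff S F) < e"
      unfolding approximable_def by blast
    then have "measure P S - L * measure Q S \<le> measure P F - L * measure Q F + e"
      using measure_excess_le_sym_diff[of S F] measure_M[of "sym_diff S F"] S G(2) L by force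
    then have "ennreal (measure P S - L * measure Q S) \<le> ennreal (measure P F - L * measure Q F) + e"
      using \<open>0 < e\<close> by (metis ennreal_leI ennreal_add_le less_imp_le order_trans)
    also have "\<dots> \<le> (SUP F\<in>G. ennreal (measure P F - L * measure Q F)) + e"
      using F(1) by (intro add_right_mono SUP_upper)
    finally show "ennreal (measure P S - L * measure Q S)
        \<le> (SUP F\<in>G. ennreal (measure P F - L * measure Q F)) + e" .
  qed
  show "(SUP F\<in>G. ennreal (measure P F - L * measure Q F)) \<le> emeasure (excess_measure P Q L) (space Q)"
  proof (rule SUP_least)
    fix F assume "F \<in> G"
    then have "F \<in> sets Q" using G(2) by blast
    then show "ennreal (measure P F - L * measure Q F) \<le> emeasure (excess_measure P Q L) (space Q)"
      using emeasure_excess_measure_ge[OF _ L] emeasure_space[of "excess_measure P Q L" F]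
      by (auto simp: excess_measure_def intro: order_trans)
  qed
qed

end

lemma borel_partitionD:
  assumes "borel_partition \<alpha>"
  shows "finite \<alpha>" "\<alpha> \<subseteq> sets borel" "disjoint \<alpha>" "\<Union>\<alpha> = UNIV"
  using assms unfolding borel_partition_def by auto

lemma Union_eq_Union_finer_cells:
  assumes "disjoint \<alpha>" "\<Union>\<gamma> = UNIV" "refines \<gamma> \<alpha>" "B \<subseteq> \<alpha>"
  shows "\<Union>B = \<Union>{C\<in>\<gamma>. C \<subseteq> \<Union>B}"
proof (intro equalityI subsetI)
  fix x assume "x \<in> \<Union>B"
  then obtain A where A: "A \<in> B" "x \<in> A" by blast
  obtain C where C: "C \<in> \<gamma>" "x \<in> C" using assms(2) by blast
  then obtain A' where A': "A' \<in> \<alpha>" "C \<subseteq> A'" using assms(3) unfolding refines_def by blast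
  then have "A' = A" using A C assms(1,4) by (auto dest: disjointD)
  then show "x \<in> \<Union>{C\<in>\<gamma>. C \<subseteq> \<Union>B}" using A A' C by blast
qed blast

definition cell_unions :: "'a set set set \<Rightarrow> 'a set set" where
  "cell_unions \<A> = {\<Union>B | B \<alpha>. \<alpha> \<in> \<A> \<and> B \<subseteq> \<alpha>}"

lemma algebra_cell_unions:
  assumes parts: "\<forall>\<alpha>\<in>\<A>. borel_partition \<alpha>" and dir: "directed_refinement \<A>"
  shows "algebra UNIV (cell_unions \<A>)"
  unfolding algebra_iff_Un
proof (intro conjI ballI)
  show "cell_unions \<A> \<subseteq> Pow UNIV" by simp
  obtain \<alpha> where "\<alpha> \<in> \<A>" using dir unfolding directed_refinement_def by blast
  then show "{} \<in> cell_unions \<A>" unfolding cell_unions_def by blast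
next
  fix F assume "F \<in> cell_unions \<A>"
  then obtain B \<alpha> where B: "F = \<Union>B" "\<alpha> \<in> \<A>" "B \<subseteq> \<alpha>" unfolding cell_unions_def by blast
  moreover have "disjoint \<alpha>" "\<Union>\<alpha> = UNIV" using parts B(2) borel_partitionD(3,4) by blast+
  ultimately have "UNIV - F = \<Union>(\<alpha> - B)"
    by (intro equalityI) (blast, auto dest: disjointD)
  then show "UNIV - F \<in> cell_unions \<A>" using B(2) unfolding cell_unions_def by blast
next
  fix F H assume "F \<in> cell_unions \<A>" "H \<in> cell_unions \<A>"
  then obtain B \<alpha> B' \<alpha>' where B: "F = \<Union>B" "\<alpha> \<in> \<A>" "B \<subseteq> \<alpha>"
    and B': "H = \<Union>B'" "\<alpha>' \<in> \<A>" "B' \<subseteq> \<alpha>'"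
    unfolding cell_unions_def by blast
  obtain \<gamma> where \<gamma>: "\<gamma> \<in> \<A>" "refines \<gamma> \<alpha>" "refines \<gamma> \<alpha>'"
    using dir B(2) B'(2) unfolding directed_refinement_def by blast
  have "F = \<Union>{C\<in>\<gamma>. C \<subseteq> F}" "H = \<Union>{C\<in>\<gamma>. C \<subseteq> H}"
    using Union_eq_Union_finer_cells[of _ \<gamma>] borel_partitionD(3,4) parts B B' \<gamma> by metis+
  then have "F \<union> H = \<Union>({C\<in>\<gamma>. C \<subseteq> F} \<union> {C\<in>\<gamma>. C \<subseteq> H})" by blast
  then show "F \<union> H \<in> cell_unions \<A>"
    using \<gamma>(1) unfolding cell_unions_def by blast
qed

lemma cell_unions_subset_borel:
  assumes "\<forall>\<alpha>\<in>\<A>. borel_partition \<alpha>"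
  shows "cell_unions \<A> \<subseteq> sets borel"
  using assms borel_partitionD(1,2) finite_subset
  unfolding cell_unions_def by (fastforce intro!: sets.finite_Union)

lemma sets_borel_subset_sigma_cell_unions:
  assumes "resolves \<A>"
  shows "sets borel \<subseteq> sigma_sets UNIV (cell_unions \<A>)"
proof -
  have "A \<in> cell_unions \<A>" if "A \<in> \<alpha>" "\<alpha> \<in> \<A>" for A \<alpha>
    using that unfolding cell_unions_def by (intro CollectI exI[of _ "{A}"] exI[of _ \<alpha>]) auto
  then have "\<Union>\<A> \<subseteq> cell_unions \<A>" by blast
  then show ?thesis
    using assms unfolding resolves_def by (metis sigma_sets_mono')
qed

lemma (in abs_continuous_finite_measures) SUP_cell_unions_le_SUP_sum_excess:
  assumes "\<And>\<alpha>. \<alpha> \<in> \<A> \<Longrightarrow> finite \<alpha> \<and> \<alpha> \<subseteq> sets Q \<and> disjoint \<alpha>"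
  shows "(SUP F\<in>cell_unions \<A>. ennreal (measure P F - L * measure Q F))
    \<le> (SUP \<alpha>\<in>\<A>. ennreal (\<Sum>A\<in>\<alpha>. max 0 (measure P A - L * measure Q A)))"
proof (rule SUP_least)
  fix F assume "F \<in> cell_unions \<A>"
  then obtain B \<alpha> where B: "F = \<Union>B" "\<alpha> \<in> \<A>" "B \<subseteq> \<alpha>" unfolding cell_unions_def by blast
  then have "measure P F - L * measure Q F \<le> (\<Sum>A\<in>\<alpha>. max 0 (measure P A - L * measure Q A))"
    unfolding B(1) using assms by (intro measure_Union_excess_le_sum) auto
  then show "ennreal (measure P F - L * measure Q F)
      \<le> (SUP \<alpha>\<in>\<A>. ennreal (\<Sum>A\<in>\<alpha>. max 0 (measure P A - L * measure Q A)))"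
    using B(2) by (meson ennreal_leI SUP_upper order_trans)
qed

theorem mainTheorem3:
  fixes \<A> :: "'a::t2_space set set set"
    and P Q :: "'a measure" and L :: real
  assumes parts: "\<forall>\<alpha>\<in>\<A>. borel_partition \<alpha>"
    and dir: "directed_refinement \<A>"
    and res: "resolves \<A>"
    and P: "prob_space P" "sets P = sets borel"
    and Q: "prob_space Q" "sets Q = sets borel"
    and ac: "absolutely_continuous Q P"
    and L: "L > 0"
  shows "meet_defect P Q L = (SUP \<alpha>\<in>\<A>. ennreal (hist_meet_defect P Q L \<alpha>))
    \<and> (SUP \<alpha>\<in>\<A>. ennreal (hist_meet_defect P Q L \<alpha>))
        = (SUP \<alpha>\<in>\<A>. ennreal (\<Sum>A\<in>\<alpha>. max 0 (measure P A - L * measure Q A)))"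
proof -
  interpret P: prob_space P by fact
  interpret Q: prob_space Q by fact
  interpret abs_continuous_finite_measures P Q
    by unfold_locales (simp_all add: P(2) Q(2) ac)
  have space_Q: "space Q = UNIV" using Q(2) by (metis sets_eq_imp_space_eq space_borel)
  define h where "h \<alpha> = (\<Sum>A\<in>\<alpha>. max 0 (measure P A - L * measure Q A))" for \<alpha>
  have hist: "hist_meet_defect P Q L \<alpha> = h \<alpha>" for \<alpha>
    unfolding hist_meet_defect_def h_def by (intro sum.cong) (auto simp: min_def max_def)
  have sup_cells: "meet_defect P Q L = (SUP F\<in>cell_unions \<A>. ennreal (measure P F - L * measure Q F))"
    unfolding meet_defect_eq_emeasure_excess_measure using L
    by (intro emeasure_excess_measure_eq_SUP)
      (simp_all add: space_Q Q(2) algebra_cell_unions[OF parts dir] cell_unions_subset_borel[OF parts]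
        sets_borel_subset_sigma_cell_unions[OF res])
  have "(SUP \<alpha>\<in>\<A>. ennreal (h \<alpha>)) \<le> meet_defect P Q L"
    unfolding meet_defect_eq_emeasure_excess_measure h_def using parts L Q(2)
    by (intro SUP_least sum_excess_le_emeasure_excess_measure) (auto dest: borel_partitionD)
  moreover have "(SUP F\<in>cell_unions \<A>. ennreal (measure P F - L * measure Q F)) \<le> (SUP \<alpha>\<in>\<A>. ennreal (h \<alpha>))"
    unfolding h_def using parts Q(2)
    by (intro SUP_cell_unions_le_SUP_sum_excess) (auto dest: borel_partitionD)
  ultimately show ?thesis
    unfolding hist h_def[symmetric] sup_cells by (metis antisym)
qed

end
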